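(* Let $P$ be a partial order on $[n]$ which is a disjoint union of chains $c_1,\dots,c_m$ (each $c_r$ totally ordered by $P$, elements of distinct chains incomparable, the $c_r$ partitioning $[n]$), and assign to each chain $c$ a relation $\rho_c\in\{<,>,\le,\ge,=\}$. Call $g\in\widetilde{\mathcal F}_n$ $P$-chain monotone if for every chain $c$ and all $i,j\in c$ with $i<_P j$ one has $g(i)\,\rho_c\,g(j)$. Let $\pi$ be uniform on $\mathrm{PF}_n$ and $f$ uniform on $\widetilde{\mathcal F}_n$. Then $$P\{\pi\text{ is }P\text{-chain monotone}\}=P\{f\text{ is }P\text{-chain monotone}\}.$$ (In particular, with $\rho_c$ equal to $<$ for every chain, $P\{\pi\text{ is }P\text{-monotone}\}=P\{f\text{ is }P\text{-monotone}\}$, where $g$ is $P$-monotone if $i<_Pj$ implies $g(i)<g(j)$.)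
   Context: A parking function of length $n$ is a sequence $(\pi_1,\dots,\pi_n)$ with $1\le\pi_i\le n$ such that $\#\{t:\pi_t\le i\}\ge i$ for all $1\le i\le n$; $\mathrm{PF}_n$ denotes the set of these. $\widetilde{\mathcal F}_n$ is the set of all functions $g:[n]\to[n+1]$, so $\mathrm{PF}_n\subseteq\widetilde{\mathcal F}_n$. *)

theory Defs
  imports Complex_Main "HOL-Library.FuncSet"
begin

definition Ftilde :: "nat \<Rightarrow> (nat \<Rightarrow> nat) set" where
  "Ftilde n = {1..n} \<rightarrow>\<^sub>E {1..n+1}"

definition PF :: "nat \<Rightarrow> (nat \<Rightarrow> nat) set" where
  "PF n = {p \<in> {1..n} \<rightarrow>\<^sub>E {1..n}.
            \<forall>i\<in>{1..n}. card {t \<in> {1..n}. p t \<le> i} \<ge> i}"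

datatype rel = Less | Greater | LessEq | GreaterEq | Equal

fun rel_holds :: "rel \<Rightarrow> nat \<Rightarrow> nat \<Rightarrow> bool" where
  "rel_holds Less a b = (a < b)"
| "rel_holds Greater a b = (a > b)"
| "rel_holds LessEq a b = (a \<le> b)"
| "rel_holds GreaterEq a b = (a \<ge> b)"
| "rel_holds Equal a b = (a = b)"

definition chain_decomposition ::
  "nat \<Rightarrow> (nat \<Rightarrow> nat \<Rightarrow> bool) \<Rightarrow> nat set set \<Rightarrow> bool" where
  "chain_decomposition n P C \<longleftrightarrow>
     (\<forall>x y. P x y \<longrightarrow> x \<in> {1..n} \<and> y \<in> {1..n}) \<and>
     (\<forall>x. \<not> P x x) \<and>
     (\<forall>x y z. P x y \<longrightarrow> P y z \<longrightarrow> P x z) \<and>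
     \<Union>C = {1..n} \<and> {} \<notin> C \<and>
     (\<forall>c\<in>C. \<forall>c'\<in>C. c \<noteq> c' \<longrightarrow> c \<inter> c' = {}) \<and>
     (\<forall>c\<in>C. \<forall>x\<in>c. \<forall>y\<in>c. x \<noteq> y \<longrightarrow> P x y \<or> P y x) \<and>
     (\<forall>c\<in>C. \<forall>c'\<in>C. c \<noteq> c' \<longrightarrow> (\<forall>x\<in>c. \<forall>y\<in>c'. \<not> P x y))"

definition chain_monotone ::
  "(nat \<Rightarrow> nat \<Rightarrow> bool) \<Rightarrow> nat set set \<Rightarrow> (nat set \<Rightarrow> rel) \<Rightarrow> (nat \<Rightarrow> nat) \<Rightarrow> bool" where
  "chain_monotone P C \<rho> g \<longleftrightarrow>
     (\<forall>c\<in>C. \<forall>i\<in>c. \<forall>j\<in>c. P i j \<longrightarrow> rel_holds (\<rho> c) (g i) (g j))"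

end

theory Submission
  imports Defs "HOL-Library.Disjoint_Sets" "HOL-Number_Theory.Cong"
begin

text \<open>Adding a constant modulo \<open>n + 1\<close> to all values splits \<open>\<^bold>F\<^sub>n\<close> into orbits of
  size \<open>n + 1\<close>, each containing exactly one parking function (Pollak). Chain monotonicity
  is not constant on these orbits, but its symmetrization is: let \<open>G\<close> be the group of
  permutations of \<open>[n]\<close> mapping every chain onto itself, and count for \<open>g\<close> the
  \<open>\<sigma> \<in> G\<close> with \<open>g \<circ> \<sigma>\<close> chain monotone. Along a chain, a cyclic shift of the values only
  moves the values above some threshold below all others, and a cyclic rotation of the
  chain undoes this; so the count is constant on orbits. Double counting over \<open>G\<close> gives
  \<open>|G| \<cdot> #{monotone f \<in> \<^bold>F\<^sub>n} = (n + 1) \<cdot> |G| \<cdot> #{monotone \<pi> \<in> PF\<^sub>n}\<close>, while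
  \<open>|\<^bold>F\<^sub>n| = (n + 1) \<cdot> |PF\<^sub>n|\<close>.\<close>

section \<open>Cyclic shifts\<close>

definition cyclic_shift :: "nat \<Rightarrow> nat \<Rightarrow> nat \<Rightarrow> nat" where
  "cyclic_shift n k v = (if v + k \<le> Suc n then v + k else v + k - Suc n)"

lemma cyclic_shift_in_range:
  "v \<in> {1..Suc n} \<Longrightarrow> k \<le> Suc n \<Longrightarrow> cyclic_shift n k v \<in> {1..Suc n}"
  unfolding cyclic_shift_def by auto

lemma cyclic_shift_0: "v \<in> {1..Suc n} \<Longrightarrow> cyclic_shift n 0 v = v"
  unfolding cyclic_shift_def by auto

lemma cyclic_shift_inverse:
  "k \<le> Suc n \<Longrightarrow> v \<in> {1..Suc n} \<Longrightarrow> cyclic_shift n (Suc n - k) (cyclic_shift n k v) = v"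
  unfolding cyclic_shift_def by auto

lemma cyclic_shift_mod:
  "k \<le> Suc n \<Longrightarrow> v \<in> {1..Suc n} \<Longrightarrow> cyclic_shift n (k mod Suc n) v = cyclic_shift n k v"
  by (cases "k = Suc n") (auto simp: cyclic_shift_def)

lemma cyclic_shift_cancel:
  "k \<le> k' \<Longrightarrow> k' \<le> n \<Longrightarrow> x \<in> {1..Suc n} \<Longrightarrow> y \<in> {1..Suc n}
   \<Longrightarrow> cyclic_shift n k x = cyclic_shift n k' y \<Longrightarrow> x = cyclic_shift n (k' - k) y"
  unfolding cyclic_shift_def by (auto split: if_splits)

lemma cyclic_shift_back_le_iff:
  "v \<in> {1..Suc n} \<Longrightarrow> a \<in> {1..Suc n} \<Longrightarrow> 1 \<le> i \<Longrightarrow> i + a \<le> Suc n \<Longrightarrow>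
   cyclic_shift n (Suc n - a) v \<le> i \<longleftrightarrow> a < v \<and> v \<le> a + i"
  unfolding cyclic_shift_def atLeastAtMost_iff by (split if_split) arith

lemma cyclic_shift_back_le_iff_wrap:
  "v \<in> {1..Suc n} \<Longrightarrow> a \<le> Suc n \<Longrightarrow> Suc n < i + a \<Longrightarrow> i \<le> n \<Longrightarrow>
   cyclic_shift n (Suc n - a) v \<le> i \<longleftrightarrow> a < v \<or> v \<le> i + a - Suc n"
  unfolding cyclic_shift_def atLeastAtMost_iff by (split if_split) arith

lemma cyclic_shift_back_ne_top:
  "v \<in> {1..Suc n} \<Longrightarrow> a \<in> {1..Suc n} \<Longrightarrow> v \<noteq> a \<Longrightarrow> cyclic_shift n (Suc n - a) v \<noteq> Suc n"
  unfolding cyclic_shift_def atLeastAtMost_iff by (split if_split) arith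

definition swaps_blocks :: "nat set \<Rightarrow> nat \<Rightarrow> (nat \<Rightarrow> nat) \<Rightarrow> bool" where
  "swaps_blocks V \<theta> s \<longleftrightarrow>
     (\<forall>x\<in>V. \<forall>y\<in>V. x < y \<longrightarrow> (y \<le> \<theta> \<or> \<theta> < x) \<longrightarrow> s x < s y) \<and>
     (\<forall>x\<in>V. \<forall>y\<in>V. x \<le> \<theta> \<longrightarrow> \<theta> < y \<longrightarrow> s y < s x)"

lemma swaps_blocksD:
  "swaps_blocks V \<theta> s \<Longrightarrow> x \<in> V \<Longrightarrow> y \<in> V \<Longrightarrow> x \<le> \<theta> \<Longrightarrow> \<theta> < y \<Longrightarrow> s y < s x"
  unfolding swaps_blocks_def by blast

lemma cyclic_shift_swaps_blocks:
  "k \<le> Suc n \<Longrightarrow> swaps_blocks {1..Suc n} (Suc n - k) (cyclic_shift n k)"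
  unfolding swaps_blocks_def cyclic_shift_def atLeastAtMost_iff by auto

section \<open>Rotating monotone sequences\<close>

lemma rel_holds_strict_mono:
  assumes "x < y \<Longrightarrow> s x < s y" and "y < x \<Longrightarrow> s y < s x" and "rel_holds R x y"
  shows "rel_holds R (s x) (s y)"
  using assms by (cases R) (auto simp: le_less)

lemma swaps_blocks_rel_holds:
  assumes "swaps_blocks V \<theta> s" "x \<in> V" "y \<in> V" "\<theta> < x \<longleftrightarrow> \<theta> < y" "rel_holds R x y"
  shows "rel_holds R (s x) (s y)"
  by (rule rel_holds_strict_mono[OF _ _ assms(5)]) (use assms(1-4) in \<open>auto simp: swaps_blocks_def\<close>)

lemma upward_closed_iff:
  assumes up: "\<And>p q. Q p \<Longrightarrow> p < q \<Longrightarrow> q < m \<Longrightarrow> Q q" and p: "p < m"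
  shows "Q p \<longleftrightarrow> m - card {i\<in>{0..<m}. Q i} \<le> p"
proof
  assume "Q p"
  then have "{p..<m} \<subseteq> {i\<in>{0..<m}. Q i}" using up by (auto simp: le_less)
  then have "card {p..<m} \<le> card {i\<in>{0..<m}. Q i}" by (rule card_mono[rotated]) auto
  then show "m - card {i\<in>{0..<m}. Q i} \<le> p" by simp
next
  assume le: "m - card {i\<in>{0..<m}. Q i} \<le> p"
  show "Q p"
  proof (rule ccontr)
    assume nq: "\<not> Q p"
    have "{i\<in>{0..<m}. Q i} \<subseteq> {Suc p..<m}"
    proof
      fix x assume x: "x \<in> {i\<in>{0..<m}. Q i}"
      then have "\<not> x \<le> p" using nq up[where p = x and q = p] p by (cases "x = p") auto
      then show "x \<in> {Suc p..<m}" using x by auto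
    qed
    then have "card {i\<in>{0..<m}. Q i} \<le> card {Suc p..<m}" by (rule card_mono[rotated]) auto
    then show False using le p by simp
  qed
qed

lemma downward_closed_iff:
  assumes down: "\<And>p q. Q q \<Longrightarrow> p < q \<Longrightarrow> q < m \<Longrightarrow> Q p" and p: "p < m"
  shows "Q p \<longleftrightarrow> p < card {i\<in>{0..<m}. Q i}"
proof
  assume "Q p"
  then have "{0..p} \<subseteq> {i\<in>{0..<m}. Q i}" using down p by (auto simp: le_less)
  then have "card {0..p} \<le> card {i\<in>{0..<m}. Q i}" by (rule card_mono[rotated]) auto
  then show "p < card {i\<in>{0..<m}. Q i}" by simp
next
  assume less: "p < card {i\<in>{0..<m}. Q i}"
  show "Q p"
  proof (rule ccontr)
    assume nq: "\<not> Q p"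
    have "{i\<in>{0..<m}. Q i} \<subseteq> {0..<p}"
    proof
      fix x assume x: "x \<in> {i\<in>{0..<m}. Q i}"
      then have "Q x" "x < m" by auto
      then have "x \<noteq> p" "\<not> p < x" using nq down[where p = p and q = x] by auto
      then show "x \<in> {0..<p}" by simp
    qed
    then have "card {i\<in>{0..<m}. Q i} \<le> card {0..<p}" by (rule card_mono[rotated]) auto
    then show False using less by simp
  qed
qed

lemma card_filter_le: "card {i\<in>{0..<m}. Q i} \<le> (m::nat)"
proof -
  have "card {i\<in>{0..<m}. Q i} \<le> card {0..<m}" by (rule card_mono) auto
  then show ?thesis by simp
qed

lemma rotate_increasing_sequence:
  assumes S: "swaps_blocks V \<theta> s" and v_in: "\<And>i. i < m \<Longrightarrow> v i \<in> V"
    and R: "R = Less \<or> R = LessEq"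
    and mono: "\<And>i j. i < j \<Longrightarrow> j < m \<Longrightarrow> rel_holds R (v i) (v j)"
    and pq: "p < q" "q < m"
  defines "u \<equiv> card {i\<in>{0..<m}. \<theta> < v i}"
  shows "rel_holds R (s (v ((p + (m - u)) mod m))) (s (v ((q + (m - u)) mod m)))"
proof -
  have "u \<le> m" unfolding u_def by (rule card_filter_le)
  have high: "\<theta> < v i \<longleftrightarrow> m - u \<le> i" if "i < m" for i
    unfolding u_def
  proof (rule upward_closed_iff[OF _ that])
    fix i j assume "\<theta> < v i" "i < j" "j < m"
    then show "\<theta> < v j" using mono[of i j] R by auto
  qed
  have idx: "(i + (m - u)) mod m = (if i < u then i + (m - u) else i - u)" if "i < m" for i
    using that \<open>u \<le> m\<close> by (simp add: mod_if)
  consider "q < u \<or> u \<le> p" | "p < u" "u \<le> q" using pq by linarith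
  then show ?thesis
  proof cases
    case 1
    define p' q' where "p' = (p + (m - u)) mod m" and "q' = (q + (m - u)) mod m"
    have "p' < q'" "q' < m" "m - u \<le> p' \<longleftrightarrow> m - u \<le> q'"
      using 1 pq \<open>u \<le> m\<close> idx[of p] idx[of q] unfolding p'_def q'_def by auto
    then have "\<theta> < v p' \<longleftrightarrow> \<theta> < v q'" using high by simp
    then show ?thesis unfolding p'_def[symmetric] q'_def[symmetric]
      using swaps_blocks_rel_holds[OF S] v_in mono \<open>p' < q'\<close> \<open>q' < m\<close> by simp
  next
    case 2
    have p': "(p + (m - u)) mod m = p + (m - u)" and q': "(q + (m - u)) mod m = q - u"
      using 2 pq idx[of p] idx[of q] by auto
    have "p + (m - u) < m" "q - u < m" using 2 pq by auto
    moreover have "\<theta> < v (p + (m - u))" "\<not> \<theta> < v (q - u)"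
      using high 2 pq calculation by auto
    ultimately have "s (v (p + (m - u))) < s (v (q - u))"
      using swaps_blocksD[OF S] v_in by (meson not_less)
    then show ?thesis unfolding p' q' using R by auto
  qed
qed

lemma rotate_decreasing_sequence:
  assumes S: "swaps_blocks V \<theta> s" and v_in: "\<And>i. i < m \<Longrightarrow> v i \<in> V"
    and R: "R = Greater \<or> R = GreaterEq"
    and mono: "\<And>i j. i < j \<Longrightarrow> j < m \<Longrightarrow> rel_holds R (v i) (v j)"
    and pq: "p < q" "q < m"
  defines "u \<equiv> card {i\<in>{0..<m}. \<theta> < v i}"
  shows "rel_holds R (s (v ((p + u) mod m))) (s (v ((q + u) mod m)))"
proof -
  have "u \<le> m" unfolding u_def by (rule card_filter_le)
  have high: "\<theta> < v i \<longleftrightarrow> i < u" if "i < m" for i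
    unfolding u_def
  proof (rule downward_closed_iff[OF _ that])
    fix i j assume "\<theta> < v j" "i < j" "j < m"
    then show "\<theta> < v i" using mono[of i j] R by auto
  qed
  have idx: "(i + u) mod m = (if i + u < m then i + u else i + u - m)" if "i < m" for i
    using that \<open>u \<le> m\<close> by (simp add: mod_if)
  consider "q + u < m \<or> m \<le> p + u" | "p + u < m" "m \<le> q + u" using pq by linarith
  then show ?thesis
  proof cases
    case 1
    define p' q' where "p' = (p + u) mod m" and "q' = (q + u) mod m"
    have "p' < q'" "q' < m" "p' < u \<longleftrightarrow> q' < u"
      using 1 pq \<open>u \<le> m\<close> idx[of p] idx[of q] unfolding p'_def q'_def by auto
    then have "\<theta> < v p' \<longleftrightarrow> \<theta> < v q'" using high by simp
    then show ?thesis unfolding p'_def[symmetric] q'_def[symmetric]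
      using swaps_blocks_rel_holds[OF S] v_in mono \<open>p' < q'\<close> \<open>q' < m\<close> by simp
  next
    case 2
    have p': "(p + u) mod m = p + u" and q': "(q + u) mod m = q + u - m"
      using 2 pq idx[of p] idx[of q] by auto
    have "p + u < m" "q + u - m < m" using 2 pq by auto
    moreover have "\<not> \<theta> < v (p + u)" "\<theta> < v (q + u - m)"
      using high 2 pq calculation by auto
    ultimately have "s (v (q + u - m)) < s (v (p + u))"
      using swaps_blocksD[OF S] v_in by (meson not_less)
    then show ?thesis unfolding p' q' using R by auto
  qed
qed

text \<open>A block swap sends the entries above the threshold below all others. In an
  increasing sequence these entries form a final segment, which rotating by this offset
  moves to the front; in a decreasing sequence they form an initial segment, which it moves
  to the back. An \<open>Equal\<close>-monotone sequence is constant, so any offset works.\<close>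
definition rotation_offset :: "rel \<Rightarrow> nat \<Rightarrow> nat \<Rightarrow> nat" where
  "rotation_offset R m u = (if R = Greater \<or> R = GreaterEq then u else m - u)"

lemma rotate_monotone_sequence:
  assumes S: "swaps_blocks V \<theta> s" and v_in: "\<And>i. i < m \<Longrightarrow> v i \<in> V"
    and mono: "\<And>i j. i < j \<Longrightarrow> j < m \<Longrightarrow> rel_holds R (v i) (v j)"
    and pq: "p < q" "q < m"
  defines "r \<equiv> rotation_offset R m (card {i\<in>{0..<m}. \<theta> < v i})"
  shows "rel_holds R (s (v ((p + r) mod m))) (s (v ((q + r) mod m)))"
proof -
  consider "R = Less \<or> R = LessEq" | "R = Greater \<or> R = GreaterEq" | "R = Equal"
    by (cases R) auto
  then show ?thesis
  proof cases
    case 1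
    then show ?thesis unfolding r_def rotation_offset_def
      using rotate_increasing_sequence[OF S v_in 1 mono pq] by auto
  next
    case 2
    then show ?thesis unfolding r_def rotation_offset_def
      using rotate_decreasing_sequence[OF S v_in 2 mono pq] by auto
  next
    case 3
    have const: "v i = v j" if "i < m" "j < m" for i j
      using mono[of i j] mono[of j i] that 3 by (cases i j rule: linorder_cases) auto
    have "v ((p + r) mod m) = v ((q + r) mod m)" using pq by (intro const) auto
    then show ?thesis using 3 by simp
  qed
qed

lemma bij_betw_add_mod: "bij_betw (\<lambda>i. (i + r) mod m) {0..<m} {0..<(m::nat)}"
proof (cases "m = 0")
  case True
  then show ?thesis by (simp add: bij_betw_def)
next
  case False
  have inj: "inj_on (\<lambda>i. (i + r) mod m) {0..<m}"
  proof (rule inj_onI)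
    fix i j assume "i \<in> {0..<m}" "j \<in> {0..<m}" "(i + r) mod m = (j + r) mod m"
    then show "i = j"
      using cong_add_rcancel_nat[of i r j m] cong_less_modulus_unique_nat[of i j m]
      unfolding cong_def by simp
  qed
  have "(\<lambda>i. (i + r) mod m) ` {0..<m} \<subseteq> {0..<m}" using False by auto
  then show ?thesis
    unfolding bij_betw_def using inj endo_inj_surj[OF finite_atLeastLessThan _ inj] by blast
qed

lemma inj_comp_right_surj:
  assumes "surj f"
  shows "inj (\<lambda>g. g \<circ> f)"
proof (rule injI)
  fix g h :: "'a \<Rightarrow> 'c" assume eq: "g \<circ> f = h \<circ> f"
  show "g = h"
  proof
    fix y
    obtain x where "y = f x" using surjD[OF assms] ..
    then show "g y = h y" using fun_cong[OF eq, of x] by simp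
  qed
qed

section \<open>Pollak's bijection\<close>

lemma PF_valuesD: "\<pi> \<in> PF n \<Longrightarrow> t \<in> {1..n} \<Longrightarrow> \<pi> t \<in> {1..n}"
  unfolding PF_def by (auto simp: PiE_def Pi_def)

lemma PF_extensional: "\<pi> \<in> PF n \<Longrightarrow> \<pi> \<in> extensional {1..n}"
  unfolding PF_def by (auto simp: PiE_def)

lemma PF_card_le: "\<pi> \<in> PF n \<Longrightarrow> i \<in> {1..n} \<Longrightarrow> i \<le> card {t\<in>{1..n}. \<pi> t \<le> i}"
  unfolding PF_def by auto

lemma finite_PF: "finite (PF n)"
  by (rule finite_subset[of _ "{1..n} \<rightarrow>\<^sub>E {1..n}"]) (auto simp: PF_def finite_PiE)

lemma Ftilde_valuesD: "f \<in> Ftilde n \<Longrightarrow> t \<in> {1..n} \<Longrightarrow> f t \<in> {1..Suc n}"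
  unfolding Ftilde_def by (auto simp: PiE_def Pi_def)

lemma Ftilde_extensional: "f \<in> Ftilde n \<Longrightarrow> f \<in> extensional {1..n}"
  unfolding Ftilde_def by (auto simp: PiE_def)

lemma finite_Ftilde: "finite (Ftilde n)"
  unfolding Ftilde_def by (simp add: finite_PiE)

lemma card_le_add_card_greater:
  fixes f :: "'a \<Rightarrow> nat"
  assumes "finite A"
  shows "card {t\<in>A. f t \<le> a} + card {t\<in>A. a < f t} = card A"
proof -
  have "card A = card ({t\<in>A. f t \<le> a} \<union> {t\<in>A. a < f t})" by (rule arg_cong[where f = card]) auto
  also have "\<dots> = card {t\<in>A. f t \<le> a} + card {t\<in>A. a < f t}"
    by (rule card_Un_disjoint) (use assms in auto)
  finally show ?thesis by simp
qed

text \<open>The arguments where \<open>\<pi> \<le> j\<close> are those where \<open>\<pi>' > n + 1 - j\<close>, so the parking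
  conditions of \<open>\<pi>\<close> at \<open>j\<close> and of \<open>\<pi>'\<close> at \<open>n + 1 - j\<close> would need \<open>n + 1\<close> distinct
  arguments.\<close>
lemma PF_not_shift_of_PF:
  assumes \<pi>: "\<pi> \<in> PF n" and \<pi>': "\<pi>' \<in> PF n" and j: "0 < j" "j \<le> n"
    and shift: "\<And>t. t \<in> {1..n} \<Longrightarrow> \<pi> t = cyclic_shift n j (\<pi>' t)"
  shows False
proof -
  define a where "a = Suc n - j"
  have a: "a \<in> {1..n}" using j unfolding a_def by auto
  have "\<pi> t \<le> j \<longleftrightarrow> a < \<pi>' t" if "t \<in> {1..n}" for t
    using PF_valuesD[OF \<pi>' that] shift that j unfolding a_def cyclic_shift_def by auto
  then have "{t\<in>{1..n}. \<pi> t \<le> j} = {t\<in>{1..n}. a < \<pi>' t}" by auto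
  moreover have "j \<le> card {t\<in>{1..n}. \<pi> t \<le> j}" using PF_card_le[OF \<pi>] j by auto
  moreover have "a \<le> card {t\<in>{1..n}. \<pi>' t \<le> a}" using PF_card_le[OF \<pi>' a] .
  ultimately show False
    using card_le_add_card_greater[of "{1..n}" \<pi>' a] j unfolding a_def by simp
qed

definition pollak_map :: "nat \<Rightarrow> (nat \<Rightarrow> nat) \<times> nat \<Rightarrow> nat \<Rightarrow> nat" where
  "pollak_map n = (\<lambda>(\<pi>, k). restrict (\<lambda>t. cyclic_shift n k (\<pi> t)) {1..n})"

lemma pollak_map_in_Ftilde:
  assumes "x \<in> PF n \<times> {0..n}"
  shows "pollak_map n x \<in> Ftilde n"
proof -
  obtain \<pi> k where x: "x = (\<pi>, k)" and \<pi>: "\<pi> \<in> PF n" and k: "k \<le> n" using assms by auto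
  have "cyclic_shift n k (\<pi> t) \<in> {1..n + 1}" if "t \<in> {1..n}" for t
    using cyclic_shift_in_range[of "\<pi> t" n k] PF_valuesD[OF \<pi> that] k by simp
  then show ?thesis unfolding x Ftilde_def pollak_map_def by (simp add: restrict_PiE_iff)
qed

lemma pollak_map_inj: "inj_on (pollak_map n) (PF n \<times> {0..n})"
proof (rule inj_onI, clarify)
  fix \<pi> k \<pi>' k'
  assume \<pi>: "\<pi> \<in> PF n" "k \<in> {0..n}" and \<pi>': "\<pi>' \<in> PF n" "k' \<in> {0..n}"
    and eq: "pollak_map n (\<pi>, k) = pollak_map n (\<pi>', k')"
  have vals: "\<pi> t \<in> {1..Suc n}" "\<pi>' t \<in> {1..Suc n}" if "t \<in> {1..n}" for t
    using PF_valuesD[OF \<pi>(1) that] PF_valuesD[OF \<pi>'(1) that] by auto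
  have shifts: "cyclic_shift n k (\<pi> t) = cyclic_shift n k' (\<pi>' t)" if "t \<in> {1..n}" for t
    using fun_cong[OF eq, of t] that by (simp add: pollak_map_def)
  have "k = k'"
  proof (rule ccontr)
    assume "k \<noteq> k'"
    then consider "k < k'" | "k' < k" by linarith
    then show False
    proof cases
      case 1
      have "\<pi> t = cyclic_shift n (k' - k) (\<pi>' t)" if "t \<in> {1..n}" for t
        using cyclic_shift_cancel[of k k' n] shifts[OF that] vals[OF that] 1 \<pi>'(2) by simp
      moreover have "0 < k' - k" "k' - k \<le> n" using 1 \<pi>'(2) by auto
      ultimately show False using PF_not_shift_of_PF[OF \<pi>(1) \<pi>'(1)] by blast
    next
      case 2
      have "\<pi>' t = cyclic_shift n (k - k') (\<pi> t)" if "t \<in> {1..n}" for t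
        using cyclic_shift_cancel[of k' k n] shifts[OF that] vals[OF that] 2 \<pi>(2) by simp
      moreover have "0 < k - k'" "k - k' \<le> n" using 2 \<pi>(2) by auto
      ultimately show False using PF_not_shift_of_PF[OF \<pi>'(1) \<pi>(1)] by blast
    qed
  qed
  then have "\<pi> t = \<pi>' t" if "t \<in> {1..n}" for t
    using cyclic_shift_cancel[of k k n "\<pi> t" "\<pi>' t"] shifts[OF that] vals[OF that] \<pi>(2)
      cyclic_shift_0[of "\<pi>' t" n] by auto
  then have "\<pi> = \<pi>'"
    using PF_extensional[OF \<pi>(1)] PF_extensional[OF \<pi>'(1)] by (rule extensionalityI[rotated 2])
  then show "\<pi> = \<pi>' \<and> k = k'" using \<open>k = k'\<close> by simp
qed

definition excess :: "nat \<Rightarrow> (nat \<Rightarrow> nat) \<Rightarrow> nat \<Rightarrow> int" where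
  "excess n f x = int (card {t\<in>{1..n}. f t \<le> x}) - int x"

lemma ex_first_minimizer:
  fixes D :: "nat \<Rightarrow> 'a::linorder"
  assumes "finite A" "A \<noteq> {}"
  shows "\<exists>a\<in>A. (\<forall>b\<in>A. D a \<le> D b) \<and> (\<forall>b\<in>A. b < a \<longrightarrow> D a < D b)"
proof -
  define M where "M = Min (D ` A)"
  define a where "a = Min {b\<in>A. D b = M}"
  have fin: "finite {b\<in>A. D b = M}" using assms by simp
  have "M \<in> D ` A" unfolding M_def using assms by simp
  then have "{b\<in>A. D b = M} \<noteq> {}" by auto
  then have a: "a \<in> A" "D a = M" using Min_in[OF fin] unfolding a_def by auto
  have min: "D a \<le> D b" if "b \<in> A" for b using that assms a(2) unfolding M_def by simp
  have "D a < D b" if "b \<in> A" "b < a" for b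
  proof -
    have "D b \<noteq> M" using Min_le[OF fin, of b] that unfolding a_def by auto
    then show ?thesis using min[OF that(1)] a(2) by (simp add: order_le_neq_trans)
  qed
  then show ?thesis using a(1) min by blast
qed

lemma excess_first_minimizer_not_value:
  assumes f: "f \<in> Ftilde n" and a: "a \<in> {1..Suc n}"
    and min: "\<forall>b\<in>{1..Suc n}. excess n f a \<le> excess n f b"
    and first: "\<forall>b\<in>{1..Suc n}. b < a \<longrightarrow> excess n f a < excess n f b"
    and t: "t \<in> {1..n}"
  shows "f t \<noteq> a"
proof
  assume ft: "f t = a"
  show False
  proof (cases "a = 1")
    case True
    have "{t\<in>{1..n}. f t \<le> Suc n} = {1..n}" using Ftilde_valuesD[OF f] by fastforce
    then have "excess n f (Suc n) = -1" unfolding excess_def by simp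
    then have "excess n f a \<le> -1" using min[rule_format, of "Suc n"] by simp
    then have "card {t\<in>{1..n}. f t \<le> 1} = 0" using True unfolding excess_def by simp
    moreover have "t \<in> {t\<in>{1..n}. f t \<le> 1}" using t ft True by auto
    ultimately show False by (simp add: card_eq_0_iff) blast
  next
    case False
    then have "excess n f a < excess n f (a - 1)" using first[rule_format, of "a - 1"] a by auto
    then have le: "card {t\<in>{1..n}. f t \<le> a} \<le> card {t\<in>{1..n}. f t \<le> a - 1}"
      using False a unfolding excess_def by simp
    have "{t\<in>{1..n}. f t \<le> a - 1} \<subseteq> {t\<in>{1..n}. f t \<le> a}" by auto
    moreover have "t \<in> {t\<in>{1..n}. f t \<le> a} - {t\<in>{1..n}. f t \<le> a - 1}"
      using t ft False a by auto
    ultimately have "card {t\<in>{1..n}. f t \<le> a - 1} < card {t\<in>{1..n}. f t \<le> a}"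
      by (intro psubset_card_mono) auto
    then show False using le by simp
  qed
qed

lemma card_shift_back_le:
  assumes vals: "\<forall>t\<in>{1..n}. f t \<in> {1..Suc n}" and a: "a \<in> {1..Suc n}"
    and i: "1 \<le> i" "i + a \<le> Suc n"
  shows "card {t\<in>{1..n}. cyclic_shift n (Suc n - a) (f t) \<le> i}
       = card {t\<in>{1..n}. f t \<le> a + i} - card {t\<in>{1..n}. f t \<le> a}"
proof -
  have "{t\<in>{1..n}. cyclic_shift n (Suc n - a) (f t) \<le> i}
      = {t\<in>{1..n}. f t \<le> a + i} - {t\<in>{1..n}. f t \<le> a}"
    using cyclic_shift_back_le_iff[OF _ a i] vals by auto
  then show ?thesis by (simp add: card_Diff_subset subset_iff)
qed

lemma card_shift_back_le_wrap:
  assumes vals: "\<forall>t\<in>{1..n}. f t \<in> {1..Suc n}" and a: "a \<in> {1..Suc n}"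
    and i: "i \<le> n" "Suc n < i + a"
  shows "card {t\<in>{1..n}. cyclic_shift n (Suc n - a) (f t) \<le> i}
       = (n - card {t\<in>{1..n}. f t \<le> a}) + card {t\<in>{1..n}. f t \<le> i + a - Suc n}"
proof -
  have "{t\<in>{1..n}. cyclic_shift n (Suc n - a) (f t) \<le> i}
      = {t\<in>{1..n}. a < f t} \<union> {t\<in>{1..n}. f t \<le> i + a - Suc n}"
    using cyclic_shift_back_le_iff_wrap[OF _ _ i(2) i(1)] vals a by auto
  moreover have "card ({t\<in>{1..n}. a < f t} \<union> {t\<in>{1..n}. f t \<le> i + a - Suc n})
      = card {t\<in>{1..n}. a < f t} + card {t\<in>{1..n}. f t \<le> i + a - Suc n}"
    by (rule card_Un_disjoint) (use i in auto)
  ultimately show ?thesis using card_le_add_card_greater[of "{1..n}" f a] by simp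
qed

text \<open>After shifting down by \<open>a\<close>, the number of arguments with value \<open>\<le> i\<close> becomes
  \<open>C (a + i) - C a\<close>, or \<open>n - C a + C (i + a - (n + 1))\<close> once the shift wraps around,
  where \<open>C x\<close> counts the arguments with value \<open>\<le> x\<close>. So the parking condition at \<open>i\<close>
  becomes \<open>excess a \<le> excess (a + i)\<close>, resp.\ \<open>excess a < excess (i + a - (n + 1))\<close>:
  this is why \<open>a\<close> must be the first minimizer.\<close>
lemma excess_first_minimizer_shift_in_PF:
  assumes f: "f \<in> Ftilde n" and a: "a \<in> {1..Suc n}"
    and min: "\<forall>b\<in>{1..Suc n}. excess n f a \<le> excess n f b"
    and first: "\<forall>b\<in>{1..Suc n}. b < a \<longrightarrow> excess n f a < excess n f b"
  shows "restrict (\<lambda>t. cyclic_shift n (Suc n - a) (f t)) {1..n} \<in> PF n"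
proof -
  let ?s = "\<lambda>t. cyclic_shift n (Suc n - a) (f t)"
  have vals: "\<forall>t\<in>{1..n}. f t \<in> {1..Suc n}" using Ftilde_valuesD[OF f] by blast
  have "?s t \<in> {1..n}" if "t \<in> {1..n}" for t
  proof -
    have v: "f t \<in> {1..Suc n}" using vals that by blast
    have "?s t \<noteq> Suc n"
      using cyclic_shift_back_ne_top[OF v a excess_first_minimizer_not_value[OF f a min first that]] .
    then show ?thesis using cyclic_shift_in_range[OF v, of "Suc n - a"] by auto
  qed
  then have range: "restrict ?s {1..n} \<in> {1..n} \<rightarrow>\<^sub>E {1..n}" by (simp add: restrict_PiE_iff)
  have count: "i \<le> card {t\<in>{1..n}. ?s t \<le> i}" if i: "i \<in> {1..n}" for i
  proof (cases "i + a \<le> Suc n")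
    case True
    have "card {t\<in>{1..n}. f t \<le> a} \<le> card {t\<in>{1..n}. f t \<le> a + i}" by (rule card_mono) auto
    moreover have "excess n f a \<le> excess n f (a + i)" using min True i by auto
    moreover have "card {t\<in>{1..n}. ?s t \<le> i}
        = card {t\<in>{1..n}. f t \<le> a + i} - card {t\<in>{1..n}. f t \<le> a}"
      using i by (intro card_shift_back_le[OF vals a _ True]) simp
    ultimately show ?thesis unfolding excess_def by simp
  next
    case False
    have "card {t\<in>{1..n}. f t \<le> a} \<le> card {1..n}" by (rule card_mono) auto
    moreover have "excess n f a < excess n f (i + a - Suc n)"
      using first[rule_format, of "i + a - Suc n"] False i a by auto
    moreover have "card {t\<in>{1..n}. ?s t \<le> i}
        = (n - card {t\<in>{1..n}. f t \<le> a}) + card {t\<in>{1..n}. f t \<le> i + a - Suc n}"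
      using i False by (intro card_shift_back_le_wrap[OF vals a]) auto
    ultimately show ?thesis using False unfolding excess_def by simp
  qed
  have "i \<le> card {t\<in>{1..n}. restrict ?s {1..n} t \<le> i}" if "i \<in> {1..n}" for i
  proof -
    have eq: "{t\<in>{1..n}. restrict ?s {1..n} t \<le> i} = {t\<in>{1..n}. ?s t \<le> i}" by auto
    show ?thesis unfolding eq by (rule count[OF that])
  qed
  then show ?thesis using range unfolding PF_def by blast
qed

lemma pollak_map_surj: "f \<in> Ftilde n \<Longrightarrow> f \<in> pollak_map n ` (PF n \<times> {0..n})"
proof -
  assume f: "f \<in> Ftilde n"
  obtain a where a: "a \<in> {1..Suc n}"
    and min: "\<forall>b\<in>{1..Suc n}. excess n f a \<le> excess n f b"
    and first: "\<forall>b\<in>{1..Suc n}. b < a \<longrightarrow> excess n f a < excess n f b"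
    using ex_first_minimizer[of "{1..Suc n}" "excess n f"] by auto
  let ?\<pi> = "restrict (\<lambda>t. cyclic_shift n (Suc n - a) (f t)) {1..n}"
  have "pollak_map n (?\<pi>, a mod Suc n) = f"
  proof
    fix t
    show "pollak_map n (?\<pi>, a mod Suc n) t = f t"
    proof (cases "t \<in> {1..n}")
      case True
      have v: "f t \<in> {1..Suc n}" using Ftilde_valuesD[OF f True] .
      have "pollak_map n (?\<pi>, a mod Suc n) t
          = cyclic_shift n (a mod Suc n) (cyclic_shift n (Suc n - a) (f t))"
        using True by (simp add: pollak_map_def)
      also have "\<dots> = cyclic_shift n a (cyclic_shift n (Suc n - a) (f t))"
        using a by (intro cyclic_shift_mod cyclic_shift_in_range[OF v]) auto
      also have "\<dots> = f t"
        using cyclic_shift_inverse[of "Suc n - a" n "f t"] a v by simp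
      finally show ?thesis .
    next
      case False
      then show ?thesis
        using Ftilde_extensional[OF f] by (auto simp: pollak_map_def extensional_def)
    qed
  qed
  moreover have "(?\<pi>, a mod Suc n) \<in> PF n \<times> {0..n}"
    using excess_first_minimizer_shift_in_PF[OF f a min first] by auto
  ultimately show ?thesis by (rule image_eqI[OF sym])
qed

lemma pollak_map_bij: "bij_betw (pollak_map n) (PF n \<times> {0..n}) (Ftilde n)"
proof -
  have "pollak_map n ` (PF n \<times> {0..n}) \<subseteq> Ftilde n"
    by (rule image_subsetI) (rule pollak_map_in_Ftilde)
  moreover have "Ftilde n \<subseteq> pollak_map n ` (PF n \<times> {0..n})"
    by (rule subsetI) (rule pollak_map_surj)
  ultimately show ?thesis unfolding bij_betw_def using pollak_map_inj by blast
qed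

lemma card_Ftilde: "card (Ftilde n) = Suc n * card (PF n)"
  using bij_betw_same_card[OF pollak_map_bij, of n] by (simp add: card_cartesian_product algebra_simps)

section \<open>Chains and the permutations preserving them\<close>

text \<open>The part of \<open>chain_decomposition\<close> used below.\<close>
locale chain_partition =
  fixes n :: nat and P :: "nat \<Rightarrow> nat \<Rightarrow> bool" and C :: "nat set set"
  assumes P_irrefl: "\<not> P x x"
    and P_trans: "P x y \<Longrightarrow> P y z \<Longrightarrow> P x z"
    and Union_chains: "\<Union>C = {1..n}"
    and chains_disjoint: "disjoint_family_on (\<lambda>c. c) C"
    and chain_total: "c \<in> C \<Longrightarrow> x \<in> c \<Longrightarrow> y \<in> c \<Longrightarrow> x \<noteq> y \<Longrightarrow> P x y \<or> P y x"
begin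

lemma chain_subset: "c \<in> C \<Longrightarrow> c \<subseteq> {1..n}"
  using Union_chains by blast

lemma finite_chain: "c \<in> C \<Longrightarrow> finite c"
  using chain_subset finite_subset by blast

lemma chain_unique: "c \<in> C \<Longrightarrow> c' \<in> C \<Longrightarrow> x \<in> c \<Longrightarrow> x \<in> c' \<Longrightarrow> c = c'"
  using chains_disjoint unfolding disjoint_family_on_def by blast

definition chain_rank :: "nat set \<Rightarrow> nat \<Rightarrow> nat" where
  "chain_rank c x = card {y\<in>c. P y x}"

definition chain_nth :: "nat set \<Rightarrow> nat \<Rightarrow> nat" where
  "chain_nth c = inv_into c (chain_rank c)"

lemma chain_rank_less:
  assumes c: "c \<in> C" and "x \<in> c" "P x y"
  shows "chain_rank c x < chain_rank c y"
proof -
  have "{z\<in>c. P z x} \<subset> {z\<in>c. P z y}" using assms P_trans P_irrefl by blast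
  then show ?thesis unfolding chain_rank_def using finite_chain[OF c] by (simp add: psubset_card_mono)
qed

lemma chain_rank_less_card:
  assumes c: "c \<in> C" and x: "x \<in> c"
  shows "chain_rank c x < card c"
proof -
  have "{y\<in>c. P y x} \<subset> c" using x P_irrefl by blast
  then show ?thesis unfolding chain_rank_def using finite_chain[OF c] by (simp add: psubset_card_mono)
qed

lemma chain_rank_less_iff:
  assumes c: "c \<in> C" and x: "x \<in> c" and y: "y \<in> c"
  shows "P x y \<longleftrightarrow> chain_rank c x < chain_rank c y"
proof
  assume "P x y"
  then show "chain_rank c x < chain_rank c y" by (rule chain_rank_less[OF c x])
next
  assume less: "chain_rank c x < chain_rank c y"
  then have "P x y \<or> P y x" using chain_total[OF c x y] by auto
  then show "P x y" using chain_rank_less[OF c y, of x] less by auto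
qed

lemma bij_betw_chain_rank:
  assumes c: "c \<in> C"
  shows "bij_betw (chain_rank c) c {0..<card c}"
proof -
  have inj: "inj_on (chain_rank c) c"
  proof (rule inj_onI)
    fix x y assume x: "x \<in> c" and y: "y \<in> c" and eq: "chain_rank c x = chain_rank c y"
    show "x = y"
    proof (rule ccontr)
      assume "x \<noteq> y"
      then have "P x y \<or> P y x" using chain_total[OF c x y] by blast
      then show False using chain_rank_less[OF c x, of y] chain_rank_less[OF c y, of x] eq by auto
    qed
  qed
  have "chain_rank c ` c \<subseteq> {0..<card c}" using chain_rank_less_card[OF c] by auto
  moreover have "card (chain_rank c ` c) = card {0..<card c}" using card_image[OF inj] by simp
  ultimately have "chain_rank c ` c = {0..<card c}" by (intro card_subset_eq) auto
  then show ?thesis using inj unfolding bij_betw_def by blast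
qed

lemma bij_betw_chain_nth: "c \<in> C \<Longrightarrow> bij_betw (chain_nth c) {0..<card c} c"
  unfolding chain_nth_def by (rule bij_betw_inv_into[OF bij_betw_chain_rank])

lemma chain_nth_in: "c \<in> C \<Longrightarrow> p < card c \<Longrightarrow> chain_nth c p \<in> c"
  by (rule bij_betw_apply[OF bij_betw_chain_nth]) auto

lemma chain_rank_nth: "c \<in> C \<Longrightarrow> p < card c \<Longrightarrow> chain_rank c (chain_nth c p) = p"
  unfolding chain_nth_def
  by (rule f_inv_into_f) (use bij_betw_imp_surj_on[OF bij_betw_chain_rank] in auto)

definition chain_of :: "nat \<Rightarrow> nat set" where
  "chain_of x = (THE c. c \<in> C \<and> x \<in> c)"

lemma chain_of_eq: "c \<in> C \<Longrightarrow> x \<in> c \<Longrightarrow> chain_of x = c"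
  unfolding chain_of_def by (rule the_equality) (use chain_unique in blast)+

definition chain_rotation :: "(nat set \<Rightarrow> nat) \<Rightarrow> nat \<Rightarrow> nat" where
  "chain_rotation r x =
     (if x \<in> {1..n} then chain_nth (chain_of x) ((chain_rank (chain_of x) x + r (chain_of x))
        mod card (chain_of x)) else x)"

lemma chain_rotation_on_chain:
  assumes c: "c \<in> C" and x: "x \<in> c"
  shows "chain_rotation r x = chain_nth c ((chain_rank c x + r c) mod card c)"
  using chain_subset[OF c] x chain_of_eq[OF c x] by (auto simp: chain_rotation_def)

lemma bij_betw_chain_rotation:
  assumes c: "c \<in> C"
  shows "bij_betw (chain_rotation r) c c"
proof -
  have "bij_betw (chain_nth c \<circ> ((\<lambda>i. (i + r c) mod card c) \<circ> chain_rank c)) c c"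
    using bij_betw_trans[OF bij_betw_trans[OF bij_betw_chain_rank[OF c] bij_betw_add_mod]
        bij_betw_chain_nth[OF c]] .
  then show ?thesis
    by (rule bij_betw_cong[THEN iffD1, rotated]) (simp add: chain_rotation_on_chain[OF c])
qed

text \<open>Fixing all points outside \<open>{1..n}\<close> keeps this group finite and makes it act on
  extensional functions.\<close>
definition chain_perms :: "(nat \<Rightarrow> nat) set" where
  "chain_perms = {\<sigma>. (\<forall>c\<in>C. bij_betw \<sigma> c c) \<and> (\<forall>x. x \<notin> {1..n} \<longrightarrow> \<sigma> x = x)}"

lemma chain_rotation_in_chain_perms: "chain_rotation r \<in> chain_perms"
  unfolding chain_perms_def using bij_betw_chain_rotation by (simp add: chain_rotation_def)

lemma chain_perms_bij_betw_chain: "\<sigma> \<in> chain_perms \<Longrightarrow> c \<in> C \<Longrightarrow> bij_betw \<sigma> c c"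
  unfolding chain_perms_def by blast

lemma chain_perms_outside: "\<sigma> \<in> chain_perms \<Longrightarrow> x \<notin> {1..n} \<Longrightarrow> \<sigma> x = x"
  unfolding chain_perms_def by blast

lemma comp_in_chain_perms:
  assumes \<sigma>: "\<sigma> \<in> chain_perms" and \<tau>: "\<tau> \<in> chain_perms"
  shows "\<sigma> \<circ> \<tau> \<in> chain_perms"
  using bij_betw_trans[OF chain_perms_bij_betw_chain[OF \<tau>] chain_perms_bij_betw_chain[OF \<sigma>]]
    chain_perms_outside[OF \<sigma>] chain_perms_outside[OF \<tau>]
  unfolding chain_perms_def by simp

lemma chain_perms_bij:
  assumes "\<sigma> \<in> chain_perms"
  shows "bij_betw \<sigma> {1..n} {1..n}"
proof -
  have "bij_betw \<sigma> (\<Union>c\<in>C. c) (\<Union>c\<in>C. c)"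
    by (rule bij_betw_UNION_disjoint[OF chains_disjoint]) (rule chain_perms_bij_betw_chain[OF assms])
  then show ?thesis using Union_chains by simp
qed

lemma chain_perms_surj:
  assumes \<sigma>: "\<sigma> \<in> chain_perms"
  shows "surj \<sigma>"
proof -
  have "y \<in> range \<sigma>" for y
  proof (cases "y \<in> {1..n}")
    case True
    then show ?thesis using bij_betw_imp_surj_on[OF chain_perms_bij[OF \<sigma>]] by blast
  next
    case False
    then show ?thesis using rangeI[of \<sigma> y] chain_perms_outside[OF \<sigma> False] by simp
  qed
  then show ?thesis by blast
qed

lemma finite_chain_perms: "finite chain_perms"
proof (rule finite_imageD)
  have "(\<lambda>\<sigma>. restrict \<sigma> {1..n}) ` chain_perms \<subseteq> {1..n} \<rightarrow>\<^sub>E {1..n}"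
    using bij_betw_apply[OF chain_perms_bij] by (auto simp: restrict_PiE_iff)
  then show "finite ((\<lambda>\<sigma>. restrict \<sigma> {1..n}) ` chain_perms)"
    by (rule finite_subset) (simp add: finite_PiE)
  show "inj_on (\<lambda>\<sigma>. restrict \<sigma> {1..n}) chain_perms"
  proof (rule inj_onI)
    fix \<sigma> \<tau> assume \<sigma>: "\<sigma> \<in> chain_perms" and \<tau>: "\<tau> \<in> chain_perms"
      and eq: "restrict \<sigma> {1..n} = restrict \<tau> {1..n}"
    show "\<sigma> = \<tau>"
    proof
      fix x show "\<sigma> x = \<tau> x"
        using fun_cong[OF eq, of x] chain_perms_outside[OF \<sigma>] chain_perms_outside[OF \<tau>]
        by (cases "x \<in> {1..n}") auto
    qed
  qed
qed

section \<open>Symmetrized counting\<close>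

lemma chain_monotone_cong:
  assumes eq: "\<forall>t\<in>{1..n}. g t = h t"
  shows "chain_monotone P C \<rho> g = chain_monotone P C \<rho> h"
proof -
  have "g i = h i" if "c \<in> C" "i \<in> c" for c i using eq chain_subset[OF that(1)] that(2) by blast
  then show ?thesis unfolding chain_monotone_def by auto
qed

lemma chain_monotone_nth:
  assumes mono: "chain_monotone P C \<rho> h" and c: "c \<in> C" and pq: "p < q" "q < card c"
  shows "rel_holds (\<rho> c) (h (chain_nth c p)) (h (chain_nth c q))"
proof -
  have p: "p < card c" using pq by simp
  have in_c: "chain_nth c p \<in> c" "chain_nth c q \<in> c" using chain_nth_in[OF c] p pq(2) by auto
  moreover have "P (chain_nth c p) (chain_nth c q)"
    using chain_rank_less_iff[OF c in_c] chain_rank_nth[OF c p] chain_rank_nth[OF c pq(2)] pq(1)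
    by simp
  ultimately show ?thesis using mono c unfolding chain_monotone_def by blast
qed

definition monotone_rearrangements :: "(nat set \<Rightarrow> rel) \<Rightarrow> (nat \<Rightarrow> nat) \<Rightarrow> nat" where
  "monotone_rearrangements \<rho> g = card {\<sigma>\<in>chain_perms. chain_monotone P C \<rho> (g \<circ> \<sigma>)}"

lemma monotone_rearrangements_cong:
  assumes "\<forall>t\<in>{1..n}. g t = h t"
  shows "monotone_rearrangements \<rho> g = monotone_rearrangements \<rho> h"
proof -
  have "chain_monotone P C \<rho> (g \<circ> \<sigma>) = chain_monotone P C \<rho> (h \<circ> \<sigma>)" if "\<sigma> \<in> chain_perms" for \<sigma>
    using assms bij_betw_apply[OF chain_perms_bij[OF that]] by (intro chain_monotone_cong) simp
  then have "{\<sigma>\<in>chain_perms. chain_monotone P C \<rho> (g \<circ> \<sigma>)}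
      = {\<sigma>\<in>chain_perms. chain_monotone P C \<rho> (h \<circ> \<sigma>)}" by blast
  then show ?thesis unfolding monotone_rearrangements_def by simp
qed

lemma PF_comp_chain_perm:
  assumes \<pi>: "\<pi> \<in> PF n" and \<sigma>: "\<sigma> \<in> chain_perms"
  shows "\<pi> \<circ> \<sigma> \<in> PF n"
proof -
  have "\<pi> \<circ> \<sigma> \<in> {1..n} \<rightarrow>\<^sub>E {1..n}"
    using PF_valuesD[OF \<pi>] PF_extensional[OF \<pi>] bij_betw_apply[OF chain_perms_bij[OF \<sigma>]]
      chain_perms_outside[OF \<sigma>]
    by (auto simp: PiE_iff extensional_def)
  moreover have "card {t\<in>{1..n}. (\<pi> \<circ> \<sigma>) t \<le> i} = card {t\<in>{1..n}. \<pi> t \<le> i}" for i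
    by (rule bij_betw_same_card, rule bij_betw_Collect[OF chain_perms_bij[OF \<sigma>]]) simp
  ultimately show ?thesis using \<pi> unfolding PF_def by simp
qed

lemma Ftilde_comp_chain_perm:
  assumes f: "f \<in> Ftilde n" and \<sigma>: "\<sigma> \<in> chain_perms"
  shows "f \<circ> \<sigma> \<in> Ftilde n"
  using Ftilde_valuesD[OF f] Ftilde_extensional[OF f] bij_betw_apply[OF chain_perms_bij[OF \<sigma>]]
    chain_perms_outside[OF \<sigma>]
  by (auto simp: Ftilde_def PiE_iff extensional_def)

lemma card_chain_perms_mult:
  assumes fin: "finite S" and closed: "\<And>g \<sigma>. g \<in> S \<Longrightarrow> \<sigma> \<in> chain_perms \<Longrightarrow> g \<circ> \<sigma> \<in> S"
  shows "card chain_perms * card {g\<in>S. chain_monotone P C \<rho> g}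
       = (\<Sum>g\<in>S. monotone_rearrangements \<rho> g)"
proof -
  have count: "card {x\<in>A. Q x} = (\<Sum>x\<in>A. if Q x then 1 else 0)"
    if "finite A" for A and Q :: "(nat \<Rightarrow> nat) \<Rightarrow> bool"
    using that by (simp add: sum.inter_filter[symmetric])
  have perm: "card {g\<in>S. chain_monotone P C \<rho> (g \<circ> \<sigma>)} = card {g\<in>S. chain_monotone P C \<rho> g}"
    if \<sigma>: "\<sigma> \<in> chain_perms" for \<sigma>
  proof -
    have inj: "inj_on (\<lambda>g. g \<circ> \<sigma>) S"
      using inj_comp_right_surj[OF chain_perms_surj[OF \<sigma>]] by (rule inj_on_subset) simp
    have "(\<lambda>g. g \<circ> \<sigma>) ` S \<subseteq> S" by (rule image_subsetI) (rule closed[OF _ \<sigma>])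
    then have "(\<lambda>g. g \<circ> \<sigma>) ` S = S" by (rule endo_inj_surj[OF fin _ inj])
    then have "bij_betw (\<lambda>g. g \<circ> \<sigma>) S S" using inj by (simp add: bij_betw_def)
    then show ?thesis by (rule bij_betw_same_card[OF bij_betw_Collect]) simp
  qed
  have "(\<Sum>g\<in>S. monotone_rearrangements \<rho> g)
      = (\<Sum>g\<in>S. \<Sum>\<sigma>\<in>chain_perms. (if chain_monotone P C \<rho> (g \<circ> \<sigma>) then 1 else 0))"
    unfolding monotone_rearrangements_def using count[OF finite_chain_perms] by simp
  also have "\<dots> = (\<Sum>\<sigma>\<in>chain_perms. \<Sum>g\<in>S. (if chain_monotone P C \<rho> (g \<circ> \<sigma>) then 1 else 0))"
    by (rule sum.swap)
  also have "\<dots> = (\<Sum>\<sigma>\<in>chain_perms. card {g\<in>S. chain_monotone P C \<rho> g})"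
  proof (rule sum.cong[OF refl])
    fix \<sigma> assume "\<sigma> \<in> chain_perms"
    then show "(\<Sum>g\<in>S. (if chain_monotone P C \<rho> (g \<circ> \<sigma>) then 1 else 0)) = card {g\<in>S. chain_monotone P C \<rho> g}"
      using perm count[OF fin] by simp
  qed
  finally show ?thesis by simp
qed

section \<open>Invariance under cyclic shifts\<close>

text \<open>The rotation of the chains that restores monotonicity after shifting the values of
  \<open>g\<close> cyclically past the threshold \<open>\<theta>\<close>.\<close>
definition compensating_rotation :: "(nat set \<Rightarrow> rel) \<Rightarrow> nat \<Rightarrow> (nat \<Rightarrow> nat) \<Rightarrow> nat \<Rightarrow> nat" where
  "compensating_rotation \<rho> \<theta> g =
     chain_rotation (\<lambda>c. rotation_offset (\<rho> c) (card c) (card {x\<in>c. \<theta> < g x}))"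

lemma card_chain_filter_perm:
  assumes \<sigma>: "\<sigma> \<in> chain_perms" and c: "c \<in> C"
  shows "card {p\<in>{0..<card c}. Q (\<sigma> (chain_nth c p))} = card {x\<in>c. Q x}"
  using bij_betw_trans[OF bij_betw_chain_nth[OF c] chain_perms_bij_betw_chain[OF \<sigma> c]]
  by (rule bij_betw_same_card[OF bij_betw_Collect]) simp

lemma chain_monotone_shift_comp_rotation:
  assumes g: "\<forall>t\<in>{1..n}. g t \<in> {1..Suc n}" and k: "k \<le> Suc n"
    and \<sigma>: "\<sigma> \<in> chain_perms" and mono: "chain_monotone P C \<rho> (g \<circ> \<sigma>)"
  shows "chain_monotone P C \<rho>
           ((\<lambda>t. cyclic_shift n k (g t)) \<circ> (\<sigma> \<circ> compensating_rotation \<rho> (Suc n - k) g))"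
  unfolding chain_monotone_def
proof (intro ballI impI)
  fix c i j assume c: "c \<in> C" and i: "i \<in> c" and j: "j \<in> c" and "P i j"
  define v where "v p = g (\<sigma> (chain_nth c p))" for p
  have rank: "chain_rank c i < chain_rank c j" "chain_rank c j < card c"
    using chain_rank_less[OF c i \<open>P i j\<close>] chain_rank_less_card[OF c j] by auto
  have v_in: "v p \<in> {1..Suc n}" if "p < card c" for p
    using g chain_subset[OF c] bij_betw_apply[OF chain_perms_bij_betw_chain[OF \<sigma> c]]
      chain_nth_in[OF c that] unfolding v_def by blast
  have v_mono: "rel_holds (\<rho> c) (v p) (v q)" if "p < q" "q < card c" for p q
    using chain_monotone_nth[OF mono c that] unfolding v_def by simp
  have count: "card {p\<in>{0..<card c}. Suc n - k < v p} = card {x\<in>c. Suc n - k < g x}"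
    unfolding v_def by (rule card_chain_filter_perm[OF \<sigma> c])
  have rotation: "compensating_rotation \<rho> (Suc n - k) g x
      = chain_nth c ((chain_rank c x
          + rotation_offset (\<rho> c) (card c) (card {x\<in>c. Suc n - k < g x})) mod card c)"
    if "x \<in> c" for x
    using chain_rotation_on_chain[OF c that] unfolding compensating_rotation_def by simp
  show "rel_holds (\<rho> c)
      (((\<lambda>t. cyclic_shift n k (g t)) \<circ> (\<sigma> \<circ> compensating_rotation \<rho> (Suc n - k) g)) i)
      (((\<lambda>t. cyclic_shift n k (g t)) \<circ> (\<sigma> \<circ> compensating_rotation \<rho> (Suc n - k) g)) j)"
    using rotate_monotone_sequence[where v = v and m = "card c",
        OF cyclic_shift_swaps_blocks[OF k] v_in v_mono rank]
    unfolding count by (simp add: v_def rotation[OF i] rotation[OF j])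
qed

lemma monotone_rearrangements_shift_le:
  assumes g: "\<forall>t\<in>{1..n}. g t \<in> {1..Suc n}" and k: "k \<le> Suc n"
  shows "monotone_rearrangements \<rho> g \<le> monotone_rearrangements \<rho> (\<lambda>t. cyclic_shift n k (g t))"
proof -
  let ?\<Psi> = "compensating_rotation \<rho> (Suc n - k) g"
  let ?A = "{\<sigma>\<in>chain_perms. chain_monotone P C \<rho> (g \<circ> \<sigma>)}"
  have \<Psi>: "?\<Psi> \<in> chain_perms"
    unfolding compensating_rotation_def by (rule chain_rotation_in_chain_perms)
  have "inj_on (\<lambda>\<sigma>. \<sigma> \<circ> ?\<Psi>) ?A"
    using inj_comp_right_surj[OF chain_perms_surj[OF \<Psi>]] by (rule inj_on_subset) simp
  moreover have "(\<lambda>\<sigma>. \<sigma> \<circ> ?\<Psi>) ` ?A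
      \<subseteq> {\<sigma>\<in>chain_perms. chain_monotone P C \<rho> ((\<lambda>t. cyclic_shift n k (g t)) \<circ> \<sigma>)}"
    using chain_monotone_shift_comp_rotation[OF g k] comp_in_chain_perms[OF _ \<Psi>] by auto
  ultimately show ?thesis unfolding monotone_rearrangements_def
    by (rule card_inj_on_le) (rule finite_subset[OF _ finite_chain_perms], blast)
qed

lemma monotone_rearrangements_shift:
  assumes g: "\<forall>t\<in>{1..n}. g t \<in> {1..Suc n}" and k: "k \<le> Suc n"
  shows "monotone_rearrangements \<rho> (\<lambda>t. cyclic_shift n k (g t)) = monotone_rearrangements \<rho> g"
proof -
  have "monotone_rearrangements \<rho> (\<lambda>t. cyclic_shift n k (g t))
      \<le> monotone_rearrangements \<rho> (\<lambda>t. cyclic_shift n (Suc n - k) (cyclic_shift n k (g t)))"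
    using g cyclic_shift_in_range k by (intro monotone_rearrangements_shift_le) auto
  also have "\<dots> = monotone_rearrangements \<rho> g"
    using g cyclic_shift_inverse[OF k] by (intro monotone_rearrangements_cong) simp
  finally show ?thesis using monotone_rearrangements_shift_le[OF g k, of \<rho>] by linarith
qed

lemma monotone_rearrangements_pollak_map:
  assumes \<pi>: "\<pi> \<in> PF n" and k: "k \<in> {0..n}"
  shows "monotone_rearrangements \<rho> (pollak_map n (\<pi>, k)) = monotone_rearrangements \<rho> \<pi>"
proof -
  have "monotone_rearrangements \<rho> (pollak_map n (\<pi>, k))
      = monotone_rearrangements \<rho> (\<lambda>t. cyclic_shift n k (\<pi> t))"
    by (rule monotone_rearrangements_cong) (simp add: pollak_map_def)
  also have "\<dots> = monotone_rearrangements \<rho> \<pi>"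
  proof (rule monotone_rearrangements_shift)
    show "\<forall>t\<in>{1..n}. \<pi> t \<in> {1..Suc n}" using PF_valuesD[OF \<pi>] by fastforce
  qed (use k in simp)
  finally show ?thesis .
qed

lemma card_chain_monotone_Ftilde:
  "card {f\<in>Ftilde n. chain_monotone P C \<rho> f} = Suc n * card {\<pi>\<in>PF n. chain_monotone P C \<rho> \<pi>}"
proof -
  have "card chain_perms * card {f\<in>Ftilde n. chain_monotone P C \<rho> f}
      = (\<Sum>f\<in>Ftilde n. monotone_rearrangements \<rho> f)"
    by (rule card_chain_perms_mult[OF finite_Ftilde Ftilde_comp_chain_perm])
  also have "\<dots> = (\<Sum>x\<in>PF n \<times> {0..n}. monotone_rearrangements \<rho> (pollak_map n x))"
    by (rule sum.reindex_bij_betw[OF pollak_map_bij, symmetric])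
  also have "\<dots> = (\<Sum>(\<pi>, k)\<in>PF n \<times> {0..n}. monotone_rearrangements \<rho> (pollak_map n (\<pi>, k)))"
    by (rule sum.cong[OF refl]) auto
  also have "\<dots> = (\<Sum>\<pi>\<in>PF n. \<Sum>k\<in>{0..n}. monotone_rearrangements \<rho> (pollak_map n (\<pi>, k)))"
    by (rule sum.cartesian_product[symmetric])
  also have "\<dots> = (\<Sum>\<pi>\<in>PF n. \<Sum>k\<in>{0..n}. monotone_rearrangements \<rho> \<pi>)"
    by (intro sum.cong refl monotone_rearrangements_pollak_map)
  also have "\<dots> = Suc n * (\<Sum>\<pi>\<in>PF n. monotone_rearrangements \<rho> \<pi>)"
    by (simp add: sum_distrib_left)
  also have "\<dots> = card chain_perms * (Suc n * card {\<pi>\<in>PF n. chain_monotone P C \<rho> \<pi>})"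
    by (simp only: card_chain_perms_mult[OF finite_PF PF_comp_chain_perm, symmetric] mult.left_commute)
  finally have "card chain_perms * card {f\<in>Ftilde n. chain_monotone P C \<rho> f}
      = card chain_perms * (Suc n * card {\<pi>\<in>PF n. chain_monotone P C \<rho> \<pi>})" .
  moreover have "card chain_perms > 0"
    using finite_chain_perms chain_rotation_in_chain_perms card_gt_0_iff by blast
  ultimately show ?thesis by simp
qed

end

lemma chain_decomposition_imp_chain_partition:
  "chain_decomposition n P C \<Longrightarrow> chain_partition n P C"
  unfolding chain_decomposition_def chain_partition_def disjoint_family_on_def
  by (elim conjE) (intro conjI; blast)

theorem theorem10:
  fixes n :: nat and P :: "nat \<Rightarrow> nat \<Rightarrow> bool" and C :: "nat set set"
    and \<rho> :: "nat set \<Rightarrow> rel"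
  assumes "chain_decomposition n P C"
  shows "real (card {\<pi> \<in> PF n. chain_monotone P C \<rho> \<pi>}) / real (card (PF n))
       = real (card {f \<in> Ftilde n. chain_monotone P C \<rho> f}) / real (card (Ftilde n))"
proof -
  interpret chain_partition n P C
    using assms by (rule chain_decomposition_imp_chain_partition)
  show ?thesis unfolding card_chain_monotone_Ftilde card_Ftilde of_nat_mult
    by (rule mult_divide_mult_cancel_left[symmetric]) simp
qed

end
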